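(* Fix a constant $a\ge1$. There is a constant $C=C(a)$ such that every $k$-terminal network $G=(V,E,T,c)$ with $n=|V|$ and integer weights $c:E\to\{1,\dots,n^{a}\}$ admits a terminal-cuts scheme with storage of at most $C\,|\mathcal{T}_e(G)|\,(k+\log n)$ bits; that is, there is a bit string $M=P(G)$ of that length and a procedure $R$ such that $R(S,M)=\mathrm{mincut}_G(S)$ for every $S\subset T$ with $S\neq\emptyset,T$, where $R$ uses only $S$ and $M$ (not $G$).
   Context: A $k$-terminal network $G=(V,E,T,c)$ is a finite connected undirected graph $(V,E)$ with edge weights $c$ and a set $T\subseteq V$ of $|T|=k$ terminals. For $W\subseteq V$ let $\delta(W)$ be the set of edges with exactly one endpoint in $W$. For $S\subset T$ with $S\neq\emptyset,T$, $\mathrm{mincut}_G(S)$ is the minimum of $\sum_{e\in\delta(W)}c(e)$ over all $W$ with $W\cap T\in\{S,T\setminus S\}$; the minimizing cutset is assumed unique (consistent tie-breaking) and denoted $E_S$. $CC(F)$ denotes the set of connected components of $(V,E\setminus F)$, and $\mathcal{T}_e(G)=\{S\subset T:\ S\neq\emptyset,T,\ |CC(E_S)|=2\}$. A terminal-cuts scheme consists of a preprocessing map $P$ taking $G$ to a memory $M$ and a query procedure $R$ which, given $S$ and $M$ but without access to $G$, outputs $\mathrm{mincut}_G(S)$. *)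

theory Defs
  imports Complex_Main "HOL-Library.Nat_Bijection"
begin

text \<open>Networks: vertices are natural numbers, V a finite vertex set, undirected edges are
  stored as pairs (u,v) with u < v, terminals are T = {0..<k}.\<close>

definition und :: "(nat \<times> nat) set \<Rightarrow> (nat \<times> nat) set" where
  "und F = {(u,v). (u,v) \<in> F \<or> (v,u) \<in> F}"

definition connected_graph :: "nat set \<Rightarrow> (nat \<times> nat) set \<Rightarrow> bool" where
  "connected_graph V E \<longleftrightarrow> (\<forall>u\<in>V. \<forall>v\<in>V. (u,v) \<in> (und E)\<^sup>*)"

definition network :: "nat set \<Rightarrow> (nat \<times> nat) set \<Rightarrow> nat \<Rightarrow> bool" where
  "network V E k \<longleftrightarrow> finite V \<and> V \<noteq> {} \<and> E \<subseteq> {(u,v). u < v \<and> u \<in> V \<and> v \<in> V}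
     \<and> {0..<k} \<subseteq> V \<and> connected_graph V E"

definition delta :: "(nat \<times> nat) set \<Rightarrow> nat set \<Rightarrow> (nat \<times> nat) set" where
  "delta E W = {e \<in> E. (fst e \<in> W) \<noteq> (snd e \<in> W)}"

definition cut_cost :: "(nat \<times> nat \<Rightarrow> nat) \<Rightarrow> (nat \<times> nat) set \<Rightarrow> nat" where
  "cut_cost c F = (\<Sum>e\<in>F. c e)"

definition cutsets :: "nat set \<Rightarrow> (nat \<times> nat) set \<Rightarrow> nat set \<Rightarrow> nat set \<Rightarrow> (nat \<times> nat) set set" where
  "cutsets V E T S = {delta E W | W. W \<subseteq> V \<and> (W \<inter> T = S \<or> W \<inter> T = T - S)}"

definition mincut :: "nat set \<Rightarrow> (nat \<times> nat) set \<Rightarrow> nat set \<Rightarrow> (nat \<times> nat \<Rightarrow> nat) \<Rightarrow> nat set \<Rightarrow> nat" where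
  "mincut V E T c S = Min (cut_cost c ` cutsets V E T S)"

text \<open>Consistent tie-breaking by perturbation: among minimum cutsets choose the one
  minimising the injective key sum of 2^(index e) over its edges.\<close>
definition tie_key :: "(nat \<times> nat) set \<Rightarrow> nat" where
  "tie_key F = (\<Sum>e\<in>F. 2 ^ prod_encode e)"

definition min_cutsets :: "nat set \<Rightarrow> (nat \<times> nat) set \<Rightarrow> nat set \<Rightarrow> (nat \<times> nat \<Rightarrow> nat) \<Rightarrow> nat set \<Rightarrow> (nat \<times> nat) set set" where
  "min_cutsets V E T c S = {F \<in> cutsets V E T S. cut_cost c F = mincut V E T c S}"

definition cutset_E :: "nat set \<Rightarrow> (nat \<times> nat) set \<Rightarrow> nat set \<Rightarrow> (nat \<times> nat \<Rightarrow> nat) \<Rightarrow> nat set \<Rightarrow> (nat \<times> nat) set" where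
  "cutset_E V E T c S = (THE F. F \<in> min_cutsets V E T c S \<and>
      (\<forall>F' \<in> min_cutsets V E T c S. tie_key F \<le> tie_key F'))"

definition CC :: "nat set \<Rightarrow> (nat \<times> nat) set \<Rightarrow> (nat \<times> nat) set \<Rightarrow> nat set set" where
  "CC V E F = V // {(u,v). u \<in> V \<and> v \<in> V \<and> (u,v) \<in> (und (E - F))\<^sup>*}"

definition Te :: "nat set \<Rightarrow> (nat \<times> nat) set \<Rightarrow> nat set \<Rightarrow> (nat \<times> nat \<Rightarrow> nat) \<Rightarrow> nat set set" where
  "Te V E T c = {S. S \<subseteq> T \<and> S \<noteq> {} \<and> S \<noteq> T \<and> card (CC V E (cutset_E V E T c S)) = 2}"

end

theory Submission
  imports Defs
begin

text \<open>
  For a nontrivial terminal set S outside T_e(G), deleting the minimum cutset E_S = delta(U)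
  leaves at least three components, so one side U of the cut contains two or more of them.
  Every component A inside U has delta(A) contained in E_S, these cutsets are disjoint, and
  each contains an edge; hence the sets A \<inter> T cover U \<inter> T (which is S or T - S),
  have strictly smaller mincut, and their mincuts add up to at most mincut(S). As mincut is
  invariant under complementation and subadditive, induction on mincut(S) shows that mincut(S)
  is the least value derivable by complements and unions from the table of pairs
  (S', mincut(S')) with S' in T_e(G). The memory is k followed by this table in Elias gamma
  code; an entry costs O(k + log n) bits, since mincut(S) is at most n^2 * n^a.
\<close>

section \<open>Binary and Elias gamma codes\<close>

fun bits :: "nat \<Rightarrow> bool list" where
  "bits n = (if n = 0 then [] else bits (n div 2) @ [odd n])"

declare bits.simps [simp del]

lemma bits_0 [simp]: "bits 0 = []"
  by (simp add: bits.simps)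

lemma bits_rec: "n \<noteq> 0 \<Longrightarrow> bits n = bits (n div 2) @ [odd n]"
  by (simp add: bits.simps)

definition of_bits :: "bool list \<Rightarrow> nat" where
  "of_bits = foldl (\<lambda>m b. 2 * m + of_bool b) 0"

lemma of_bits_snoc: "of_bits (bs @ [b]) = 2 * of_bits bs + of_bool b"
  by (simp add: of_bits_def)

lemma of_bits_bits [simp]: "of_bits (bits n) = n"
proof (induction n rule: bits.induct)
  case (1 n)
  then show ?case
    by (cases "n = 0") (auto simp: bits_rec of_bits_snoc of_bits_def)
qed

lemma bits_inject: "bits m = bits n \<longleftrightarrow> m = n"
  by (metis of_bits_bits)

lemma length_bits_le: "n < 2 ^ m \<Longrightarrow> length (bits n) \<le> m"
proof (induction n arbitrary: m rule: bits.induct)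
  case (1 n)
  show ?case
  proof (cases "n = 0")
    case False
    then obtain m' where "m = Suc m'"
      using "1.prems" by (cases m) auto
    with 1 False show ?thesis
      by (simp add: bits_rec)
  qed simp
qed

lemma two_power_length_bits_le: "n \<noteq> 0 \<Longrightarrow> 2 ^ length (bits n) \<le> 2 * n"
proof (induction n rule: bits.induct)
  case (1 n)
  then show ?case
    by (cases "n div 2 = 0") (auto simp: bits_rec)
qed

lemma length_bits_le_log:
  assumes "n \<noteq> 0" shows "length (bits n) \<le> log 2 n + 1"
proof -
  have "(2::real) ^ length (bits n) \<le> 2 * n"
    using two_power_length_bits_le[OF assms]
    by (metis of_nat_le_iff of_nat_mult of_nat_numeral of_nat_power)
  then have "log 2 (2 ^ length (bits n)) \<le> log 2 (2 * n)"
    using assms by (subst log_le_cancel_iff) auto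
  then show ?thesis
    using assms by (simp add: log_mult)
qed

lemma set_encode_less:
  assumes "A \<subseteq> {0..<k}" shows "set_encode A < 2 ^ k"
proof -
  from assms have "set_encode A \<le> (\<Sum>i=0..<k. 2 ^ i)"
    unfolding set_encode_def by (intro sum_mono2) auto
  also have "\<dots> < 2 ^ k"
    by (simp add: sum_power2)
  finally show ?thesis .
qed

text \<open>The unary length prefix makes the code self-delimiting.\<close>

definition gamma_code :: "nat \<Rightarrow> bool list" where
  "gamma_code n = replicate (length (bits n)) True @ False # bits n"

definition gamma_codes :: "nat list \<Rightarrow> bool list" where
  "gamma_codes ns = concat (map gamma_code ns)"

lemma replicate_True_Cons_False_inject:
  "replicate m True @ False # xs = replicate m' True @ False # ys \<Longrightarrow> m = m' \<and> xs = ys"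
proof (induction m arbitrary: m')
  case 0
  then show ?case
    by (cases m') auto
next
  case (Suc m)
  then show ?case
    by (cases m') auto
qed

lemma gamma_code_append_inject:
  assumes "gamma_code m @ xs = gamma_code n @ ys" shows "m = n \<and> xs = ys"
proof -
  from assms have "length (bits m) = length (bits n) \<and> bits m @ xs = bits n @ ys"
    unfolding gamma_code_def by (intro replicate_True_Cons_False_inject) simp
  then show ?thesis
    by (metis append_eq_append_conv bits_inject)
qed

lemma gamma_codes_inject: "gamma_codes ms = gamma_codes ns \<longleftrightarrow> ms = ns"
proof
  show "gamma_codes ms = gamma_codes ns \<Longrightarrow> ms = ns"
  proof (induction ms arbitrary: ns)
    case Nil
    then show ?case
      by (cases ns) (auto simp: gamma_codes_def gamma_code_def)
  next
    case (Cons m ms)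
    then obtain n ns' where "ns = n # ns'"
      by (cases ns) (auto simp: gamma_codes_def gamma_code_def)
    with Cons show ?case
      using gamma_code_append_inject[of m "gamma_codes ms" n "gamma_codes ns'"]
      by (auto simp: gamma_codes_def)
  qed
qed simp

lemma length_gamma_codes: "length (gamma_codes ns) = (\<Sum>n\<leftarrow>ns. 2 * length (bits n) + 1)"
  by (induction ns) (auto simp: gamma_codes_def gamma_code_def)

section \<open>Recovering a symmetric subadditive function from a table\<close>

inductive derivable :: "'a set \<Rightarrow> ('a set \<times> nat) set \<Rightarrow> 'a set \<Rightarrow> nat \<Rightarrow> bool"
  for T P where
  base: "(X, v) \<in> P \<Longrightarrow> derivable T P X v"
| complement: "derivable T P X v \<Longrightarrow> derivable T P (T - X) v"
| union: "derivable T P X v \<Longrightarrow> derivable T P Y w \<Longrightarrow> derivable T P (X \<union> Y) (v + w)"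

lemma not_derivable_empty: "\<not> derivable T {} X v"
proof
  assume "derivable T {} X v"
  then show False
    by induction simp_all
qed

lemma derivable_Union:
  assumes "finite \<Y>" "\<Y> \<noteq> {}" "\<forall>Y\<in>\<Y>. derivable T P Y (g Y)"
  shows "derivable T P (\<Union>\<Y>) (\<Sum>Y\<in>\<Y>. g Y)"
  using assms
proof (induction \<Y> rule: finite_ne_induct)
  case (insert Y \<Y>)
  then show ?case
    using union[of T P Y "g Y" "\<Union>\<Y>"] by simp
qed simp

lemma derivable_sound:
  assumes "derivable T ((\<lambda>S. (S, f S)) ` B) X v"
    and "B \<subseteq> Pow T"
    and "\<And>S. S \<subseteq> T \<Longrightarrow> f (T - S) = f S"
    and "\<And>S S'. S \<subseteq> T \<Longrightarrow> S' \<subseteq> T \<Longrightarrow> f (S \<union> S') \<le> f S + f S'"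
  shows "X \<subseteq> T \<and> f X \<le> v"
  using assms(1)
proof induction
  case (union X v Y w)
  then have "f (X \<union> Y) \<le> f X + f Y"
    using assms(4) by simp
  with union show ?case
    by simp
qed (use assms(2,3) in auto)

definition nontrivial :: "'a set \<Rightarrow> 'a set \<Rightarrow> bool" where
  "nontrivial T S \<longleftrightarrow> S \<subseteq> T \<and> S \<noteq> {} \<and> S \<noteq> T"

definition splits :: "'a set \<Rightarrow> ('a set \<Rightarrow> nat) \<Rightarrow> 'a set \<Rightarrow> bool" where
  "splits T f S \<longleftrightarrow> (\<exists>X\<in>{S, T - S}. \<exists>\<Y>. finite \<Y> \<and> \<Y> \<noteq> {} \<and> \<Union>\<Y> = X \<and>
     (\<forall>Y\<in>\<Y>. Y \<noteq> {} \<and> f Y < f S) \<and> (\<Sum>Y\<in>\<Y>. f Y) \<le> f S)"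

lemma two_le_if_nontrivial:
  fixes k :: nat
  assumes "nontrivial {0..<k} S" shows "2 \<le> k"
proof -
  have "S \<noteq> {}" "S \<subset> {0..<k}"
    using assms by (auto simp: nontrivial_def)
  then obtain x y where "x \<in> S" "y \<in> {0..<k} - S"
    using psubset_imp_ex_mem by blast
  then have "x < k" "y < k" "x \<noteq> y"
    using \<open>S \<subset> {0..<k}\<close> by auto
  then show ?thesis
    by linarith
qed

lemma derivable_complete:
  assumes "\<And>S. nontrivial T S \<Longrightarrow> S \<notin> B \<Longrightarrow> splits T f S"
  shows "nontrivial T S \<Longrightarrow> \<exists>v\<le>f S. derivable T ((\<lambda>S. (S, f S)) ` B) S v"
proof (induction "f S" arbitrary: S rule: less_induct)
  case less
  let ?P = "(\<lambda>S. (S, f S)) ` B"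
  show ?case
  proof (cases "S \<in> B")
    case True
    then show ?thesis
      using base[of S "f S" ?P] by auto
  next
    case False
    then have "splits T f S"
      using assms less.prems by blast
    then obtain X \<Y> where X: "X \<in> {S, T - S}" and \<Y>: "finite \<Y>" "\<Y> \<noteq> {}" "\<Union>\<Y> = X"
      and parts: "\<forall>Y\<in>\<Y>. Y \<noteq> {} \<and> f Y < f S" and sum: "(\<Sum>Y\<in>\<Y>. f Y) \<le> f S"
      unfolding splits_def by blast
    have "X \<subset> T"
      using X less.prems by (auto simp: nontrivial_def)
    then have "\<forall>Y\<in>\<Y>. \<exists>v\<le>f Y. derivable T ?P Y v"
      using parts \<Y>(3) by (intro ballI less.hyps) (auto simp: nontrivial_def)
    then obtain g where g: "\<forall>Y\<in>\<Y>. g Y \<le> f Y \<and> derivable T ?P Y (g Y)"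
      by metis
    then have "derivable T ?P X (\<Sum>Y\<in>\<Y>. g Y)"
      using derivable_Union[of \<Y> T ?P g] \<Y> by auto
    moreover have "(\<Sum>Y\<in>\<Y>. g Y) \<le> f S"
      using sum_mono[of \<Y> g f] g sum by auto
    moreover have "T - (T - S) = S"
      using less.prems by (auto simp: nontrivial_def)
    ultimately show ?thesis
      using X complement[of T ?P X] by auto
  qed
qed

lemma Least_derivable:
  assumes "B \<subseteq> Pow T"
    and "\<And>S. S \<subseteq> T \<Longrightarrow> f (T - S) = f S"
    and "\<And>S S'. S \<subseteq> T \<Longrightarrow> S' \<subseteq> T \<Longrightarrow> f (S \<union> S') \<le> f S + f S'"
    and "\<And>S. nontrivial T S \<Longrightarrow> S \<notin> B \<Longrightarrow> splits T f S"
    and "nontrivial T S"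
  shows "(LEAST v. derivable T ((\<lambda>S. (S, f S)) ` B) S v) = f S"
proof -
  have lower: "f S \<le> w" if "derivable T ((\<lambda>S. (S, f S)) ` B) S w" for w
    using derivable_sound[OF that assms(1-3)] by blast
  obtain v where v: "v \<le> f S" "derivable T ((\<lambda>S. (S, f S)) ` B) S v"
    using derivable_complete[OF assms(4,5)] by blast
  with lower have "v = f S"
    by (simp add: order_antisym)
  with v lower show ?thesis
    by (intro Least_equality) auto
qed

section \<open>Encoding and querying a table\<close>

definition encode_table :: "nat \<Rightarrow> (nat set \<Rightarrow> nat) \<Rightarrow> nat set list \<Rightarrow> bool list" where
  "encode_table k f Ss = gamma_codes (k # concat (map (\<lambda>S. [set_encode S, f S]) Ss))"

fun decode_pairs :: "nat list \<Rightarrow> (nat set \<times> nat) set" where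
  "decode_pairs (x # v # ns) = insert (set_decode x, v) (decode_pairs ns)"
| "decode_pairs _ = {}"

definition query :: "nat set \<Rightarrow> bool list \<Rightarrow> nat" where
  "query S M = (let ns = THE ns. gamma_codes ns = M
     in LEAST v. derivable {0..<hd ns} (decode_pairs (tl ns)) S v)"

lemma decode_pairs_encode:
  "\<forall>S\<in>set Ss. finite S \<Longrightarrow>
    decode_pairs (concat (map (\<lambda>S. [set_encode S, f S]) Ss)) = (\<lambda>S. (S, f S)) ` set Ss"
  by (induction Ss) auto

lemma query_encode_table:
  assumes "\<forall>S\<in>set Ss. finite S"
  shows "query S (encode_table k f Ss) = (LEAST v. derivable {0..<k} ((\<lambda>S. (S, f S)) ` set Ss) S v)"
proof -
  have "(THE ns. gamma_codes ns = encode_table k f Ss) = k # concat (map (\<lambda>S. [set_encode S, f S]) Ss)"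
    unfolding encode_table_def by (rule the_equality) (simp_all add: gamma_codes_inject)
  then show ?thesis
    by (simp add: query_def decode_pairs_encode[OF assms])
qed

lemma length_encode_table:
  "length (encode_table k f Ss) =
    2 * length (bits k) + 1 + (\<Sum>S\<leftarrow>Ss. 2 * length (bits (set_encode S)) + 2 * length (bits (f S)) + 2)"
proof -
  have "length (gamma_codes (concat (map (\<lambda>S. [set_encode S, f S]) Ss))) =
      (\<Sum>S\<leftarrow>Ss. 2 * length (bits (set_encode S)) + 2 * length (bits (f S)) + 2)"
    by (induction Ss) (simp_all add: length_gamma_codes)
  then show ?thesis
    by (simp add: encode_table_def length_gamma_codes)
qed

lemma length_encode_table_le:
  fixes b :: real
  assumes "\<forall>S\<in>set Ss. S \<subseteq> {0..<k}" and "\<forall>S\<in>set Ss. length (bits (f S)) \<le> b"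
  shows "length (encode_table k f Ss) \<le> 2 * k + 1 + length Ss * (2 * k + 2 * b + 2)"
proof -
  let ?entry = "\<lambda>S. 2 * length (bits (set_encode S)) + 2 * length (bits (f S)) + 2"
  have entry: "real (?entry S) \<le> 2 * k + 2 * b + 2" if "S \<in> set Ss" for S
    using assms that length_bits_le[OF set_encode_less, of S k] by auto
  have "(\<Sum>S\<leftarrow>Ss. real (?entry S)) \<le> (\<Sum>S\<leftarrow>Ss. 2 * k + 2 * b + 2)"
    by (rule sum_list_mono) (rule entry)
  also have "\<dots> = length Ss * (2 * k + 2 * b + 2)"
    by (simp add: sum_list_triv)
  finally have "(\<Sum>S\<leftarrow>Ss. real (?entry S)) \<le> length Ss * (2 * k + 2 * b + 2)" .
  moreover have "length (bits k) \<le> k"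
    by (simp add: length_bits_le)
  ultimately show ?thesis
    by (simp add: length_encode_table flip: sum_list_of_nat add: o_def)
qed

section \<open>Cuts and components of terminal networks\<close>

lemma the_least_key_in:
  fixes g :: "'a \<Rightarrow> 'b::linorder"
  assumes "finite A" "A \<noteq> {}" "inj_on g A"
  shows "(THE x. x \<in> A \<and> (\<forall>y\<in>A. g x \<le> g y)) \<in> A"
proof -
  have "Min (g ` A) \<in> g ` A"
    using assms(1,2) by simp
  then obtain x where x: "x \<in> A" "g x = Min (g ` A)"
    by (metis imageE)
  have least: "g x \<le> g y" if "y \<in> A" for y
    using x assms(1) that by simp
  have "x' = x" if "x' \<in> A" "\<forall>y\<in>A. g x' \<le> g y" for x'
    using that least x(1) assms(3) by (metis inj_onD order_antisym)
  then have "\<exists>!x. x \<in> A \<and> (\<forall>y\<in>A. g x \<le> g y)"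
    using x(1) least by blast
  then show ?thesis
    by (rule theI'[THEN conjunct1])
qed

lemma inj_on_tie_key: "inj_on tie_key (Collect finite)"
proof (rule inj_onI)
  fix F F' :: "(nat \<times> nat) set"
  assume "F \<in> Collect finite" "F' \<in> Collect finite" "tie_key F = tie_key F'"
  then have "set_encode (prod_encode ` F) = set_encode (prod_encode ` F')"
    by (simp add: tie_key_def set_encode_def sum.reindex inj_prod_encode)
  then have "prod_encode ` F = prod_encode ` F'"
    using \<open>F \<in> Collect finite\<close> \<open>F' \<in> Collect finite\<close> by (simp add: set_encode_eq)
  then show "F = F'"
    by (simp add: inj_image_eq_iff inj_prod_encode)
qed

definition component_rel :: "nat set \<Rightarrow> (nat \<times> nat) set \<Rightarrow> (nat \<times> nat) set \<Rightarrow> (nat \<times> nat) set" where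
  "component_rel V E F = {(u,v). u \<in> V \<and> v \<in> V \<and> (u,v) \<in> (und (E - F))\<^sup>*}"

lemma CC_eq_quotient: "CC V E F = V // component_rel V E F"
  by (simp add: CC_def component_rel_def)

lemma sym_und: "sym (und F)"
  by (auto simp: sym_def und_def)

lemma equiv_component_rel: "equiv V (component_rel V E F)"
proof (rule equivI)
  have "sym ((und (E - F))\<^sup>*)"
    by (simp add: sym_rtrancl sym_und)
  then show "sym (component_rel V E F)"
    by (auto simp: component_rel_def sym_def)
qed (auto simp: component_rel_def refl_on_def trans_def)

lemma rtrancl_und_delta_same_side:
  "(u,v) \<in> (und (E - delta E U))\<^sup>* \<Longrightarrow> u \<in> U \<longleftrightarrow> v \<in> U"
  by (induction rule: rtrancl_induct) (auto simp: und_def delta_def)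

lemma component_subset_side:
  assumes "x \<in> U" shows "component_rel V E (delta E U) `` {x} \<subseteq> U"
  using assms rtrancl_und_delta_same_side by (fastforce simp: component_rel_def)

lemma delta_nonempty_if_path:
  "(x,y) \<in> (und E)\<^sup>* \<Longrightarrow> x \<in> W \<Longrightarrow> y \<notin> W \<Longrightarrow> delta E W \<noteq> {}"
proof (induction rule: rtrancl_induct)
  case (step y z)
  then show ?case
    by (cases "y \<in> W") (auto simp: und_def delta_def)
qed simp

locale terminal_network =
  fixes V :: "nat set" and E :: "(nat \<times> nat) set" and k :: nat and c :: "nat \<times> nat \<Rightarrow> nat"
  assumes network: "network V E k" and weights_pos: "\<forall>e\<in>E. 1 \<le> c e"
begin

abbreviation T :: "nat set" where
  "T \<equiv> {0..<k}"

abbreviation mc :: "nat set \<Rightarrow> nat" where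
  "mc \<equiv> mincut V E T c"

lemma finite_V: "finite V"
  using network by (simp add: network_def)

lemma edge_in_V: "(u,v) \<in> E \<Longrightarrow> u \<in> V \<and> v \<in> V"
  using network by (auto simp: network_def)

lemma finite_E: "finite E"
proof -
  have "E \<subseteq> V \<times> V"
    using edge_in_V by auto
  then show ?thesis
    using finite_V finite_subset by blast
qed

lemma terminals_in_V: "T \<subseteq> V"
  using network by (simp add: network_def)

lemma connected: "u \<in> V \<Longrightarrow> v \<in> V \<Longrightarrow> (u,v) \<in> (und E)\<^sup>*"
  using network by (simp add: network_def connected_graph_def)

lemma card_V_pos: "0 < card V"
  using network finite_V by (simp add: network_def card_gt_0_iff)

lemma nontrivial_if_Te: "S \<in> Te V E T c \<Longrightarrow> nontrivial T S"
  by (simp add: Te_def nontrivial_def)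

lemma finite_Te: "finite (Te V E T c)"
proof (rule finite_subset)
  show "Te V E T c \<subseteq> Pow T"
    by (auto simp: Te_def)
qed simp

lemma finite_delta: "finite (delta E W)"
  using finite_E by (simp add: delta_def)

lemma delta_Diff: "delta E (V - W) = delta E W"
  using edge_in_V by (auto simp: delta_def)

lemma cut_cost_delta_pos:
  assumes "x \<in> W" "x \<in> V" "y \<in> V" "y \<notin> W" shows "1 \<le> cut_cost c (delta E W)"
proof -
  obtain e where e: "e \<in> delta E W"
    using delta_nonempty_if_path[OF connected] assms by blast
  then have "1 \<le> c e"
    using weights_pos by (simp add: delta_def)
  also have "c e \<le> cut_cost c (delta E W)"
    unfolding cut_cost_def using finite_delta by (intro member_le_sum[OF e]) auto
  finally show ?thesis .
qed

lemma finite_cutsets: "finite (cutsets V E T S)"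
proof -
  have "cutsets V E T S \<subseteq> delta E ` Pow V"
    unfolding cutsets_def by blast
  then show ?thesis
    using finite_V finite_subset by blast
qed

lemma mincut_le:
  assumes "W \<subseteq> V" "W \<inter> T = S \<or> W \<inter> T = T - S"
  shows "mc S \<le> cut_cost c (delta E W)"
proof -
  have "delta E W \<in> cutsets V E T S"
    using assms unfolding cutsets_def by blast
  then show ?thesis
    unfolding mincut_def using finite_cutsets by simp
qed

lemma mincut_in_costs:
  assumes "S \<subseteq> T" shows "mc S \<in> cut_cost c ` cutsets V E T S"
proof -
  have "delta E S \<in> cutsets V E T S"
    using assms terminals_in_V unfolding cutsets_def by blast
  then show ?thesis
    unfolding mincut_def using finite_cutsets by (intro Min_in) auto
qed

lemma mincut_attained:
  assumes "S \<subseteq> T" shows "\<exists>W\<subseteq>V. W \<inter> T = S \<and> cut_cost c (delta E W) = mc S"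
proof -
  obtain F where F: "F \<in> cutsets V E T S" "mc S = cut_cost c F"
    using mincut_in_costs[OF assms] by (rule imageE)
  then obtain W where W: "W \<subseteq> V" "W \<inter> T = S \<or> W \<inter> T = T - S" "F = delta E W"
    unfolding cutsets_def by blast
  show ?thesis
  proof (cases "W \<inter> T = S")
    case False
    with W(2) have "W \<inter> T = T - S"
      by simp
    then have "(V - W) \<inter> T = S"
      using assms terminals_in_V by auto
    moreover have "cut_cost c (delta E (V - W)) = mc S"
      using F W(3) by (simp add: delta_Diff)
    ultimately show ?thesis
      by (intro exI[of _ "V - W"]) simp
  qed (use F W in auto)
qed

lemma mincut_Diff: "S \<subseteq> T \<Longrightarrow> mc (T - S) = mc S"
  by (simp add: mincut_def cutsets_def double_diff disj_commute)

lemma mincut_Un: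
  assumes "S \<subseteq> T" "S' \<subseteq> T" shows "mc (S \<union> S') \<le> mc S + mc S'"
proof -
  obtain W where W: "W \<subseteq> V" "W \<inter> T = S" "cut_cost c (delta E W) = mc S"
    using mincut_attained[OF assms(1)] by blast
  obtain W' where W': "W' \<subseteq> V" "W' \<inter> T = S'" "cut_cost c (delta E W') = mc S'"
    using mincut_attained[OF assms(2)] by blast
  have "mc (S \<union> S') \<le> cut_cost c (delta E (W \<union> W'))"
    using W W' by (intro mincut_le) auto
  also have "\<dots> \<le> cut_cost c (delta E W \<union> delta E W')"
    unfolding cut_cost_def using finite_delta by (intro sum_mono2) (auto simp: delta_def)
  also have "\<dots> \<le> cut_cost c (delta E W) + cut_cost c (delta E W')"
    unfolding cut_cost_def by (simp add: sum_Un_nat finite_delta)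
  finally show ?thesis
    using W W' by simp
qed

lemma mincut_le_cost_E:
  assumes "S \<subseteq> T" shows "mc S \<le> cut_cost c E"
proof -
  have "mc S \<le> cut_cost c (delta E S)"
    using assms terminals_in_V by (intro mincut_le) auto
  also have "\<dots> \<le> cut_cost c E"
    unfolding cut_cost_def using finite_E by (intro sum_mono2) (auto simp: delta_def)
  finally show ?thesis .
qed

lemma cutset_E_minimal:
  assumes "S \<subseteq> T" shows "cutset_E V E T c S \<in> min_cutsets V E T c S"
proof -
  have sub: "min_cutsets V E T c S \<subseteq> cutsets V E T S"
    by (auto simp: min_cutsets_def)
  have "finite (min_cutsets V E T c S)"
    using finite_cutsets sub by (rule finite_subset[rotated])
  moreover have "min_cutsets V E T c S \<noteq> {}"
    using mincut_in_costs[OF assms] by (auto simp: min_cutsets_def)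
  moreover have "min_cutsets V E T c S \<subseteq> Collect finite"
    using sub finite_delta by (auto simp: cutsets_def)
  then have "inj_on tie_key (min_cutsets V E T c S)"
    using inj_on_tie_key by (rule inj_on_subset[rotated])
  ultimately show ?thesis
    unfolding cutset_E_def by (rule the_least_key_in)
qed

lemma finite_CC: "finite (CC V E F)"
  unfolding CC_eq_quotient by (intro finite_quotient finite_V equiv_type[OF equiv_component_rel])

lemma component_subset_V: "A \<in> CC V E F \<Longrightarrow> A \<subseteq> V"
  unfolding CC_eq_quotient using equiv_component_rel by (rule in_quotient_imp_subset)

lemma component_nonempty: "A \<in> CC V E F \<Longrightarrow> A \<noteq> {}"
  unfolding CC_eq_quotient using equiv_component_rel by (rule in_quotient_imp_non_empty)

lemma delta_component_subset:
  assumes A: "A \<in> CC V E F" shows "delta E A \<subseteq> F"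
proof
  fix e assume "e \<in> delta E A"
  then obtain p q where e: "e = (p,q)" "(p,q) \<in> E" "p \<in> A \<longleftrightarrow> q \<notin> A"
    by (cases e) (auto simp: delta_def)
  show "e \<in> F"
  proof (rule ccontr)
    assume "e \<notin> F"
    then have "(p,q) \<in> component_rel V E F" "(q,p) \<in> component_rel V E F"
      using e edge_in_V by (auto simp: component_rel_def und_def)
    then show False
      using e(3) A in_quotient_imp_closed[OF equiv_component_rel]
      unfolding CC_eq_quotient by blast
  qed
qed

definition components_inside :: "nat set \<Rightarrow> nat set set" where
  "components_inside U = {A \<in> CC V E (delta E U). A \<subseteq> U}"

lemma component_in_components_inside:
  assumes "x \<in> U" "x \<in> V"
  shows "component_rel V E (delta E U) `` {x} \<in> components_inside U"
  using assms component_subset_side quotientI[OF assms(2)]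
  by (auto simp: components_inside_def CC_eq_quotient)

lemma CC_delta_eq:
  "CC V E (delta E U) = components_inside U \<union> components_inside (V - U)"
proof -
  have "A \<subseteq> U \<or> A \<subseteq> V - U" if A: "A \<in> CC V E (delta E U)" for A
  proof -
    obtain x where x: "x \<in> V" "A = component_rel V E (delta E U) `` {x}"
      using A by (auto simp: CC_eq_quotient elim: quotientE)
    show ?thesis
    proof (cases "x \<in> U")
      case False
      then have "x \<in> V - U"
        using x(1) by blast
      then have "A \<subseteq> V - U"
        using component_subset_side[of x "V - U" V E] x(2) by (simp add: delta_Diff)
      then show ?thesis ..
    qed (use x component_subset_side in blast)
  qed
  then show ?thesis
    by (auto simp: components_inside_def delta_Diff)
qed

lemma components_inside_disjoint: "components_inside U \<inter> components_inside (V - U) = {}"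
  using component_nonempty by (fastforce simp: components_inside_def delta_Diff)

lemma components_inside_nonempty: "U \<inter> V \<noteq> {} \<Longrightarrow> components_inside U \<noteq> {}"
  using component_in_components_inside by blast

lemma subset_Union_components_inside: "U \<inter> V \<subseteq> \<Union>(components_inside U)"
proof
  fix x assume "x \<in> U \<inter> V"
  moreover from this have "x \<in> component_rel V E (delta E U) `` {x}"
    using equiv_class_self[OF equiv_component_rel] by blast
  ultimately show "x \<in> \<Union>(components_inside U)"
    using component_in_components_inside by blast
qed

lemma sum_cost_components_inside_le:
  "(\<Sum>A\<in>components_inside U. cut_cost c (delta E A)) \<le> cut_cost c (delta E U)"
proof -
  let ?Q = "components_inside U"
  have sub: "delta E A \<subseteq> delta E U" if "A \<in> ?Q" for A
    using that delta_component_subset by (auto simp: components_inside_def)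
  have disjoint: "delta E A \<inter> delta E B = {}" if "A \<in> ?Q" "B \<in> ?Q" "A \<noteq> B" for A B
  proof -
    have "A \<inter> B = {}"
      using that quotient_disj[OF equiv_component_rel, of A V E "delta E U" B]
      by (auto simp: components_inside_def CC_eq_quotient)
    moreover have "A \<subseteq> U" "B \<subseteq> U"
      using that by (auto simp: components_inside_def)
    ultimately show ?thesis
      using sub[OF that(1)] unfolding delta_def by blast
  qed
  have finite_Q: "finite ?Q"
    using finite_CC by (simp add: components_inside_def)
  have "(\<Sum>A\<in>?Q. cut_cost c (delta E A)) = cut_cost c (\<Union>A\<in>?Q. delta E A)"
    unfolding cut_cost_def using finite_Q finite_delta disjoint
    by (intro sum.UNION_disjoint[symmetric]) auto
  also have "\<dots> \<le> cut_cost c (delta E U)"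
    unfolding cut_cost_def using sub finite_delta by (intro sum_mono2) auto
  finally show ?thesis .
qed

lemma cost_delta_component_inside_pos:
  assumes "A \<in> components_inside U" "t \<in> V" "t \<notin> U"
  shows "1 \<le> cut_cost c (delta E A)"
proof -
  have A: "A \<in> CC V E (delta E U)" "A \<subseteq> U"
    using assms(1) by (auto simp: components_inside_def)
  then obtain x where "x \<in> A"
    using component_nonempty by blast
  moreover have "x \<in> V"
    using component_subset_V[OF A(1)] \<open>x \<in> A\<close> by blast
  moreover have "t \<notin> A"
    using A(2) assms(3) by blast
  ultimately show ?thesis
    using cut_cost_delta_pos assms(2) by blast
qed

lemma mincut_component_inside_less:
  assumes A: "A \<in> components_inside U" and two: "2 \<le> card (components_inside U)"
    and t: "t \<in> V" "t \<notin> U"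
  shows "mc (A \<inter> T) < cut_cost c (delta E U)"
proof -
  let ?Q = "components_inside U"
  have "finite ?Q"
    using finite_CC by (simp add: components_inside_def)
  have "\<not> ?Q \<subseteq> {A}"
    using two card_mono[of "{A}" ?Q] by auto
  then obtain B where B: "B \<in> ?Q" "B \<noteq> A"
    by blast
  have "mc (A \<inter> T) \<le> cut_cost c (delta E A)"
    using A component_subset_V by (intro mincut_le) (auto simp: components_inside_def)
  moreover have "1 \<le> cut_cost c (delta E B)"
    using B(1) t by (rule cost_delta_component_inside_pos)
  moreover have "cut_cost c (delta E A) + cut_cost c (delta E B)
      \<le> (\<Sum>X\<in>?Q. cut_cost c (delta E X))"
    using A B \<open>finite ?Q\<close> sum_mono2[of ?Q "{A, B}" "\<lambda>X. cut_cost c (delta E X)"] by simp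
  ultimately show ?thesis
    using sum_cost_components_inside_le[of U] by linarith
qed

lemma mincut_splits_if_two_components_inside:
  assumes S: "nontrivial T S" and U: "U \<subseteq> V" "U \<inter> T = S \<or> U \<inter> T = T - S"
    and min: "cut_cost c (delta E U) = mc S" and two: "2 \<le> card (components_inside U)"
  shows "splits T mc S"
proof -
  \<comment> \<open>components without terminals are dropped; they only lower the sum\<close>
  let ?Q = "{A \<in> components_inside U. A \<inter> T \<noteq> {}}"
  let ?\<Y> = "(\<lambda>A. A \<inter> T) ` ?Q"
  have finite_Q: "finite ?Q"
    using finite_CC by (simp add: components_inside_def)
  have "U \<inter> T \<noteq> {}" "U \<inter> T \<noteq> T"
    using S U(2) by (auto simp: nontrivial_def)
  then obtain t where t: "t \<in> V" "t \<notin> U"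
    using terminals_in_V by blast
  have union: "\<Union>?\<Y> = U \<inter> T"
  proof
    show "\<Union>?\<Y> \<subseteq> U \<inter> T"
      by (auto simp: components_inside_def)
    show "U \<inter> T \<subseteq> \<Union>?\<Y>"
      using subset_Union_components_inside[of U] terminals_in_V by blast
  qed
  have "(\<Sum>Y\<in>?\<Y>. mc Y) \<le> (\<Sum>A\<in>?Q. mc (A \<inter> T))"
    using sum_image_le[OF finite_Q, of mc "\<lambda>A. A \<inter> T"] by (simp add: o_def)
  also have "\<dots> \<le> (\<Sum>A\<in>?Q. cut_cost c (delta E A))"
    using component_subset_V by (intro sum_mono mincut_le) (auto simp: components_inside_def)
  also have "\<dots> \<le> (\<Sum>A\<in>components_inside U. cut_cost c (delta E A))"
    using finite_CC by (intro sum_mono2) (auto simp: components_inside_def)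
  also have "\<dots> \<le> mc S"
    using sum_cost_components_inside_le[of U] min by simp
  finally have sum: "(\<Sum>Y\<in>?\<Y>. mc Y) \<le> mc S" .
  have parts: "\<forall>Y\<in>?\<Y>. Y \<noteq> {} \<and> mc Y < mc S"
    using mincut_component_inside_less[OF _ two t] min by auto
  have nonempty: "?\<Y> \<noteq> {}"
    using union \<open>U \<inter> T \<noteq> {}\<close> by auto
  have "U \<inter> T \<in> {S, T - S}"
    using U(2) by blast
  then show ?thesis
    unfolding splits_def
    by (intro bexI[of _ "U \<inter> T"] exI[of _ ?\<Y>] conjI finite_imageI finite_Q nonempty union parts sum)
qed

lemma side_with_two_components:
  assumes S: "nontrivial T S" and not_Te: "S \<notin> Te V E T c"
  shows "\<exists>U\<subseteq>V. (U \<inter> T = S \<or> U \<inter> T = T - S) \<and> cut_cost c (delta E U) = mc S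
    \<and> 2 \<le> card (components_inside U)"
proof -
  let ?F = "cutset_E V E T c S"
  have "?F \<in> min_cutsets V E T c S"
    using cutset_E_minimal S by (simp add: nontrivial_def)
  then have F: "?F \<in> cutsets V E T S" "cut_cost c ?F = mc S"
    by (simp_all add: min_cutsets_def)
  then obtain U where U: "U \<subseteq> V" "U \<inter> T = S \<or> U \<inter> T = T - S" "?F = delta E U"
    unfolding cutsets_def by blast
  with F(2) have cost: "cut_cost c (delta E U) = mc S"
    by simp
  have "(V - U) \<inter> T = T - U \<inter> T" "T - (T - S) = S"
    using terminals_in_V S by (auto simp: nontrivial_def)
  then have U_Diff: "(V - U) \<inter> T = S \<or> (V - U) \<inter> T = T - S"
    using U(2) by (elim disjE) simp_all
  have "S \<noteq> {}" "T - S \<noteq> {}"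
    using S by (auto simp: nontrivial_def)
  then have "U \<inter> T \<noteq> {}" "(V - U) \<inter> T \<noteq> {}"
    using U(2) U_Diff by auto
  then have "components_inside U \<noteq> {}" "components_inside (V - U) \<noteq> {}"
    using terminals_in_V by (auto intro!: components_inside_nonempty)
  moreover have finite: "finite (components_inside U)" "finite (components_inside (V - U))"
    using finite_CC by (simp_all add: components_inside_def)
  ultimately have "0 < card (components_inside U)" "0 < card (components_inside (V - U))"
    by (simp_all add: card_gt_0_iff)
  moreover have "card (components_inside U) + card (components_inside (V - U)) \<noteq> 2"
    using not_Te S U(3) CC_delta_eq[of U] card_Un_disjoint[OF finite components_inside_disjoint]
    by (simp add: Te_def nontrivial_def)
  ultimately have "2 \<le> card (components_inside U) \<or> 2 \<le> card (components_inside (V - U))"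
    by linarith
  then show ?thesis
  proof
    assume "2 \<le> card (components_inside U)"
    then show ?thesis
      using U(1,2) cost by (intro exI[of _ U]) simp
  next
    assume "2 \<le> card (components_inside (V - U))"
    moreover have "cut_cost c (delta E (V - U)) = mc S"
      using cost by (simp add: delta_Diff)
    ultimately show ?thesis
      using U_Diff by (intro exI[of _ "V - U"]) simp
  qed
qed

lemma mincut_splits:
  assumes "nontrivial T S" "S \<notin> Te V E T c" shows "splits T mc S"
proof -
  obtain U where "U \<subseteq> V" "U \<inter> T = S \<or> U \<inter> T = T - S" "cut_cost c (delta E U) = mc S"
    "2 \<le> card (components_inside U)"
    using side_with_two_components[OF assms] by blast
  with assms(1) show ?thesis
    by (rule mincut_splits_if_two_components_inside)
qed

lemma Least_derivable_mincut:
  assumes "nontrivial T S"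
  shows "(LEAST v. derivable T ((\<lambda>S. (S, mc S)) ` Te V E T c) S v) = mc S"
proof (rule Least_derivable)
  show "Te V E T c \<subseteq> Pow T"
    by (auto simp: Te_def)
qed (fact mincut_Diff mincut_Un mincut_splits assms)+

lemma Te_nonempty:
  assumes "2 \<le> k" shows "Te V E T c \<noteq> {}"
proof
  assume empty: "Te V E T c = {}"
  have "{0} \<subseteq> T" "1 \<in> T - {0}"
    using assms by auto
  then have "nontrivial T {0}"
    unfolding nontrivial_def by (metis Diff_cancel empty_iff insert_not_empty)
  then obtain v where "derivable T ((\<lambda>S. (S, mc S)) ` Te V E T c) {0} v"
    using derivable_complete[OF mincut_splits] by blast
  with empty show False
    by (simp add: not_derivable_empty)
qed

section \<open>Size of the encoded table\<close>

lemma mincut_le_weight_bound: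
  fixes a :: real
  assumes weights: "\<forall>e\<in>E. real (c e) \<le> card V powr a" and "S \<subseteq> T"
  shows "mc S \<le> real (card V) ^ 2 * card V powr a"
proof -
  have "card E \<le> card (V \<times> V)"
    using edge_in_V finite_V by (intro card_mono) auto
  then have card_E: "real (card E) \<le> real (card V) ^ 2"
    by (simp add: card_cartesian_product power2_eq_square flip: of_nat_mult)
  have "real (mc S) \<le> real (cut_cost c E)"
    using mincut_le_cost_E[OF assms(2)] by simp
  also have "\<dots> = (\<Sum>e\<in>E. real (c e))"
    by (simp add: cut_cost_def)
  also have "\<dots> \<le> card E * card V powr a"
    using weights by (intro sum_bounded_above) auto
  also have "\<dots> \<le> real (card V) ^ 2 * card V powr a"
    using card_E by (intro mult_right_mono) auto
  finally show ?thesis .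
qed

lemma length_bits_mincut_le:
  fixes a :: real
  assumes "0 \<le> a" and weights: "\<forall>e\<in>E. real (c e) \<le> card V powr a" and "S \<subseteq> T"
  shows "length (bits (mc S)) \<le> (a + 2) * log 2 (card V) + 1"
proof (cases "mc S = 0")
  case True
  then show ?thesis
    using assms(1) card_V_pos by simp
next
  case False
  have "length (bits (mc S)) \<le> log 2 (mc S) + 1"
    using False by (rule length_bits_le_log)
  also have "log 2 (mc S) \<le> log 2 (real (card V) ^ 2 * card V powr a)"
    using False mincut_le_weight_bound[OF weights assms(3)] by (subst log_le_cancel_iff) auto
  also have "\<dots> = (a + 2) * log 2 (card V)"
    using card_V_pos by (simp add: log_mult log_powr log_nat_power algebra_simps)
  finally show ?thesis
    by simp
qed

lemma length_encode_mincuts_le: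
  fixes a :: real
  assumes "0 \<le> a" and weights: "\<forall>e\<in>E. real (c e) \<le> card V powr a" and "2 \<le> k"
    and Ss: "distinct Ss" "set Ss = Te V E T c"
  shows "length (encode_table k mc Ss) \<le> (2 * a + 11) * card (Te V E T c) * (k + log 2 (card V))"
proof -
  define L where "L = log 2 (card V)"
  define t where "t = real (card (Te V E T c))"
  have L: "0 \<le> L"
    using card_V_pos by (simp add: L_def)
  have t: "1 \<le> t"
    using Te_nonempty[OF assms(3)] finite_Te by (simp add: t_def Suc_le_eq card_gt_0_iff)
  have "\<forall>S\<in>set Ss. S \<subseteq> T" "\<forall>S\<in>set Ss. length (bits (mc S)) \<le> (a + 2) * L + 1"
    using Ss(2) nontrivial_if_Te length_bits_mincut_le[OF assms(1) weights]
    by (auto simp: nontrivial_def L_def)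
  then have "length (encode_table k mc Ss)
      \<le> 2 * real k + 1 + real (length Ss) * (2 * real k + 2 * ((a + 2) * L + 1) + 2)"
    by (rule length_encode_table_le)
  also have "length Ss = t"
    using distinct_card[OF Ss(1)] Ss(2) by (simp add: t_def)
  also have "2 * real k + 1 + t * (2 * real k + 2 * ((a + 2) * L + 1) + 2)
      \<le> t * (2 * real k + 1) + t * (2 * real k + (2 * a + 4) * L + 4)"
    using mult_right_mono[OF t, of "2 * real k + 1"] by (simp add: algebra_simps)
  also have "\<dots> = t * (4 * real k + 5 + (2 * a + 4) * L)"
    by (simp add: algebra_simps)
  also have "\<dots> \<le> t * ((2 * a + 11) * (real k + L))"
  proof (rule mult_left_mono)
    have "0 \<le> 2 * a * real k" "4 * real k + 5 \<le> 11 * real k"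
      using assms(1,3) by simp_all
    then have "4 * real k + 5 \<le> (2 * a + 11) * real k"
      unfolding distrib_right by linarith
    moreover have "(2 * a + 4) * L \<le> (2 * a + 11) * L"
      using L by (intro mult_right_mono) auto
    ultimately show "4 * real k + 5 + (2 * a + 4) * L \<le> (2 * a + 11) * (real k + L)"
      by (simp add: algebra_simps)
  qed (use t in simp)
  finally show ?thesis
    by (simp add: t_def L_def mult_ac)
qed

end

theorem theorem5p2:
  fixes a :: real
  assumes "a \<ge> 1"
  shows "\<exists>C::real. \<exists>R :: nat set \<Rightarrow> bool list \<Rightarrow> nat.
    \<forall>V E k c. network V E k \<and> (\<forall>e\<in>E. 1 \<le> c e \<and> real (c e) \<le> real (card V) powr a) \<longrightarrow>
      (\<exists>M :: bool list.
         real (length M) \<le> C * real (card (Te V E {0..<k} c)) * (real k + log 2 (real (card V))) \<and>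
         (\<forall>S. S \<subseteq> {0..<k} \<and> S \<noteq> {} \<and> S \<noteq> {0..<k} \<longrightarrow> R S M = mincut V E {0..<k} c S))"
proof (intro exI[of _ "2 * a + 11"] exI[of _ query] allI impI)
  fix V E k c
  assume H: "network V E k \<and> (\<forall>e\<in>E. 1 \<le> c e \<and> real (c e) \<le> real (card V) powr a)"
  then interpret terminal_network V E k c
    by unfold_locales auto
  have weights: "\<forall>e\<in>E. real (c e) \<le> card V powr a"
    using H by auto
  show "\<exists>M. real (length M) \<le> (2 * a + 11) * card (Te V E T c) * (k + log 2 (card V)) \<and>
      (\<forall>S. S \<subseteq> T \<and> S \<noteq> {} \<and> S \<noteq> T \<longrightarrow> query S M = mc S)"
  proof (cases "2 \<le> k")
    case True
    obtain Ss where Ss: "distinct Ss" "set Ss = Te V E T c"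
      using finite_distinct_list[OF finite_Te] by blast
    have "query S (encode_table k mc Ss) = mc S" if "nontrivial T S" for S
      using Ss(2) nontrivial_if_Te Least_derivable_mincut[OF that]
      by (subst query_encode_table) (auto simp: nontrivial_def intro: finite_subset)
    then show ?thesis
      using length_encode_mincuts_le[OF _ weights True Ss] assms
      by (intro exI[of _ "encode_table k mc Ss"]) (auto simp: nontrivial_def)
  next
    case False
    have "0 \<le> (2 * a + 11) * card (Te V E T c) * (k + log 2 (card V))"
      using assms card_V_pos by simp
    with False show ?thesis
      using two_le_if_nontrivial by (intro exI[of _ "[]"]) (auto simp: nontrivial_def)
  qed
qed

end
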